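(* Let $P$ be a finite poset and $\gamma\in\mathcal{U}_P^*$ with $\gamma\in(I^P_{\mathrm{comm}})^\perp$. Then $F_\gamma(\mathbf{x})$ is symmetric in $x_1,x_2,\dots$.
   Context: $\mathcal{U}_P=\mathbb{Z}\langle u_a:a\in P\rangle$ (noncommuting variables); $\mathcal{U}_P^*$ is the free $\mathbb{Z}$-module on words in the alphabet $P$, paired with $\mathcal{U}_P$ by $\langle \mathbf{u}_w, v\rangle=\delta_{vw}$ where $\mathbf{u}_w=u_{w_1}\cdots u_{w_n}$; for an ideal $I$, $I^\perp=\{\gamma:\langle z,\gamma\rangle=0\ \forall z\in I\}$. Write $a<_Pb$ for strict order. For $S\subseteq P$, $e^P_k(\mathbf{u}_S)=\sum u_{a_1}\cdots u_{a_k}$ over $a_1>_P\cdots>_Pa_k$ in $S$ ($e^P_0=1$, $e^P_k=0$ for $k<0$). $I^P_{\mathrm{comm}}$ is the ideal generated by $e^P_k(\mathbf{u}_S)e^P_\ell(\mathbf{u}_S)-e^P_\ell(\mathbf{u}_S)e^P_k(\mathbf{u}_S)$ over all $k,\ell$ and $S\subseteq P$. For a word $w$, $\mathrm{Des}_P(w)=\{i:w_{i+1}<_Pw_i\}$; $Q_D(\mathbf{x})=\sum x_{i_1}\cdots x_{i_n}$ over $i_1\le\cdots\le i_n$ with $i_j<i_{j+1}$ for $j\in D$. For $\gamma=\sum_w\gamma_w w$, $F_\gamma(\mathbf{x})=\sum_w\gamma_wQ_{\mathrm{Des}_P(w)}(\mathbf{x})$. *)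

theory Defs
  imports Main
begin

text \<open>The finite poset P is modelled as a type of class finite and order.
  Elements of U_P (noncommutative polynomials over Z in variables u_a, a in P) and of
  the dual U_P^* are both represented as integer-valued functions on words
  (coefficient functions), with finite support where required.\<close>

type_synonym 'a ncpoly = "'a list \<Rightarrow> int"

definition ncfinite :: "'a ncpoly \<Rightarrow> bool" where
  "ncfinite p \<longleftrightarrow> finite {w. p w \<noteq> 0}"

definition ncmult :: "'a ncpoly \<Rightarrow> 'a ncpoly \<Rightarrow> 'a ncpoly" where
  "ncmult p q = (\<lambda>w. \<Sum>i\<le>length w. p (take i w) * q (drop i w))"

definition elemP :: "nat \<Rightarrow> ('a::order) set \<Rightarrow> 'a ncpoly" where
  "elemP k S = (\<lambda>w. if length w = k \<and> set w \<subseteq> S \<and> sorted_wrt (\<lambda>x y. y < x) w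
                   then 1 else 0)"

definition comm_gens :: "('a::{finite,order}) ncpoly set" where
  "comm_gens = {(\<lambda>w. ncmult (elemP k S) (elemP l S) w - ncmult (elemP l S) (elemP k S) w)
                 | k l S. True}"

inductive_set ncideal :: "'a ncpoly set \<Rightarrow> 'a ncpoly set" for G where
  zero: "(\<lambda>w. 0) \<in> ncideal G"
| gen: "g \<in> G \<Longrightarrow> g \<in> ncideal G"
| add: "p \<in> ncideal G \<Longrightarrow> q \<in> ncideal G \<Longrightarrow> (\<lambda>w. p w + q w) \<in> ncideal G"
| lmult: "p \<in> ncideal G \<Longrightarrow> ncfinite r \<Longrightarrow> ncmult r p \<in> ncideal G"
| rmult: "p \<in> ncideal G \<Longrightarrow> ncfinite r \<Longrightarrow> ncmult p r \<in> ncideal G"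

definition pairing :: "'a ncpoly \<Rightarrow> 'a ncpoly \<Rightarrow> int" where
  "pairing z \<gamma> = (\<Sum>w\<in>{w. \<gamma> w \<noteq> 0}. z w * \<gamma> w)"

definition ncperp :: "'a ncpoly set \<Rightarrow> 'a ncpoly set" where
  "ncperp I = {\<gamma>. ncfinite \<gamma> \<and> (\<forall>z\<in>I. pairing z \<gamma> = 0)}"

text \<open>P-descent set, 1-indexed: i in Des iff w_{i+1} <_P w_i.\<close>
definition DesP :: "('a::order) list \<Rightarrow> nat set" where
  "DesP w = {i. 1 \<le> i \<and> i < length w \<and> w ! i < w ! (i - 1)}"

text \<open>Coefficient of the monomial x^alpha in Q_D(x) (homogeneous of degree n).
  Variables x_1, x_2, ... are indexed by 0, 1, ... (x_{j+1} has index j);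
  alpha j is the exponent of x_{j+1}. A term of Q_D corresponds to a sequence
  i_1 <= ... <= i_n with strict steps at D.\<close>
definition Qcoeff :: "nat set \<Rightarrow> nat \<Rightarrow> (nat \<Rightarrow> nat) \<Rightarrow> nat" where
  "Qcoeff D n \<alpha> = card {s :: nat list. length s = n
      \<and> (\<forall>j. 1 \<le> j \<and> j < n \<longrightarrow> s ! (j - 1) \<le> s ! j)
      \<and> (\<forall>j\<in>D. s ! (j - 1) < s ! j)
      \<and> (\<forall>i. count_list s i = \<alpha> i)}"

definition Fcoeff :: "('a::order) ncpoly \<Rightarrow> (nat \<Rightarrow> nat) \<Rightarrow> int" where
  "Fcoeff \<gamma> \<alpha> = (\<Sum>w\<in>{w. \<gamma> w \<noteq> 0}. \<gamma> w * int (Qcoeff (DesP w) (length w) \<alpha>))"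

definition symmetric_series :: "((nat \<Rightarrow> nat) \<Rightarrow> int) \<Rightarrow> bool" where
  "symmetric_series c \<longleftrightarrow> (\<forall>\<sigma> \<alpha>. bij \<sigma> \<longrightarrow> c (\<alpha> \<circ> \<sigma>) = c \<alpha>)"

end

theory Submission
  imports Defs "HOL-Library.Multiset"
begin

text \<open>Write h_n for the sum of all words of length n without P-descent, and e_k for e_k(u_P).
  A word w contributes to the coefficient of x_1^a_1 x_2^a_2 ... in Q_Des(w) exactly when it cuts
  into consecutive descent-free blocks of lengths a_1, a_2, ...; hence this coefficient of
  F_\<gamma> is the pairing of h_a_1 h_a_2 ... with \<gamma>. Inclusion-exclusion over the strictly
  decreasing initial segments of a word gives h_n = \<Sum>_k (-1)^k e_(k+1) h_(n-k-1), so by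
  induction the h_n commute with each other modulo the ideal generated by the commutators of
  the e_k. Permuting the variables only permutes the factors of h_a_1 h_a_2 ..., which therefore
  does not change the pairing with \<gamma>, as \<gamma> is orthogonal to that ideal.\<close>

section \<open>The free associative algebra\<close>

definition nc_const :: "int \<Rightarrow> 'a ncpoly" where
  "nc_const c = (\<lambda>w. if w = [] then c else 0)"

lemma ncmult_const_left: "ncmult (nc_const c) p w = c * p w"
  unfolding ncmult_def nc_const_def
  by (cases w) (simp_all add: sum.atMost_Suc_shift del: sum.atMost_Suc)

lemma ncmult_const_right: "ncmult p (nc_const c) w = p w * c"
proof -
  have "ncmult p (nc_const c) w
      = (\<Sum>i\<in>insert (length w) {..<length w}. p (take i w) * nc_const c (drop i w))"
    unfolding ncmult_def by (simp add: lessThan_Suc_atMost[symmetric])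
  also have "\<dots> = p w * c" by (simp add: nc_const_def)
  finally show ?thesis .
qed

lemma ncmult_one_left [simp]: "ncmult (nc_const 1) p = p"
  by (rule ext) (simp add: ncmult_const_left)

lemma ncmult_homogeneous_left:
  assumes "\<And>u. p u \<noteq> 0 \<Longrightarrow> length u = a"
  shows "ncmult p q w = (if a \<le> length w then p (take a w) * q (drop a w) else 0)"
proof -
  have "ncmult p q w = (\<Sum>i\<le>length w. if i = a then p (take a w) * q (drop a w) else 0)"
    unfolding ncmult_def
  proof (rule sum.cong)
    fix i assume "i \<in> {..length w}"
    then have "i \<noteq> a \<Longrightarrow> p (take i w) = 0" using assms[of "take i w"] by fastforce
    then show "p (take i w) * q (drop i w) = (if i = a then p (take a w) * q (drop a w) else 0)"
      by auto
  qed simp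
  then show ?thesis by simp
qed

lemma sum_triangle_swap:
  fixes g :: "nat \<Rightarrow> nat \<Rightarrow> 'b::comm_monoid_add"
  shows "(\<Sum>i\<le>n. \<Sum>j\<le>i. g j i) = (\<Sum>j\<le>n. \<Sum>k\<le>n - j. g j (j + k))"
proof -
  have "(\<Sum>i\<le>n. \<Sum>j\<le>i. g j i) = (\<Sum>i\<le>n. \<Sum>j\<le>i. g j (j + (i - j)))"
    by (intro sum.cong) auto
  also have "\<dots> = (\<Sum>(j, k)\<in>{(j, k). j + k \<le> n}. g j (j + k))"
    by (rule sum.triangle_reindex_eq[symmetric])
  also have "{(j, k). j + k \<le> n} = Sigma {..n} (\<lambda>j. {..n - j})" by auto
  finally show ?thesis by (simp add: sum.Sigma)
qed

lemma ncmult_assoc: "ncmult (ncmult p q) r = ncmult p (ncmult q r)"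
proof
  fix w :: "'a list"
  let ?n = "length w"
  have "ncmult (ncmult p q) r w
      = (\<Sum>i\<le>?n. \<Sum>j\<le>i. p (take j w) * q (take (i - j) (drop j w)) * r (drop i w))"
    unfolding ncmult_def
    by (intro sum.cong refl) (auto simp: sum_distrib_right min_def drop_take)
  also have "\<dots> = (\<Sum>j\<le>?n. \<Sum>k\<le>?n - j. p (take j w) * q (take k (drop j w)) * r (drop (j + k) w))"
    by (rule sum_triangle_swap[where
          g = "\<lambda>j i. p (take j w) * q (take (i - j) (drop j w)) * r (drop i w)", simplified])
  also have "\<dots> = ncmult p (ncmult q r) w"
    unfolding ncmult_def
    by (intro sum.cong refl) (auto simp: sum_distrib_left mult.assoc add.commute)
  finally show "ncmult (ncmult p q) r w = ncmult p (ncmult q r) w" .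
qed

lemma ncmult_diff_right: "ncmult p (\<lambda>w. q w - r w) = (\<lambda>w. ncmult p q w - ncmult p r w)"
  unfolding ncmult_def by (simp add: right_diff_distrib sum_subtractf)

lemma ncmult_diff_left: "ncmult (\<lambda>w. q w - r w) p = (\<lambda>w. ncmult q p w - ncmult r p w)"
  unfolding ncmult_def by (simp add: left_diff_distrib sum_subtractf)

lemma ncmult_lincomb_right:
  "ncmult r (\<lambda>w. \<Sum>j\<in>A. c j * f j w) = (\<lambda>w. \<Sum>j\<in>A. c j * ncmult r (f j) w)"
  unfolding ncmult_def by (simp add: sum_distrib_left sum.swap[of _ A] mult_ac)

lemma ncmult_lincomb_left:
  "ncmult (\<lambda>w. \<Sum>j\<in>A. c j * f j w) r = (\<lambda>w. \<Sum>j\<in>A. c j * ncmult (f j) r w)"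
  unfolding ncmult_def
  by (simp add: sum_distrib_left sum_distrib_right sum.swap[of _ A] mult_ac)

lemma ncfinite_nc_const: "ncfinite (nc_const c)"
  unfolding ncfinite_def nc_const_def
  by (rule finite_subset[of _ "{[]}"]) auto

lemma ncfinite_iff_length_bounded:
  fixes p :: "('a::finite) ncpoly"
  shows "ncfinite p \<longleftrightarrow> (\<exists>N. \<forall>w. p w \<noteq> 0 \<longrightarrow> length w \<le> N)"
proof
  assume "ncfinite p"
  then have "finite {w. p w \<noteq> 0}" by (simp add: ncfinite_def)
  then show "\<exists>N. \<forall>w. p w \<noteq> 0 \<longrightarrow> length w \<le> N"
    by (intro exI[of _ "Max (length ` {w. p w \<noteq> 0})"]) auto
next
  assume "\<exists>N. \<forall>w. p w \<noteq> 0 \<longrightarrow> length w \<le> N"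
  then obtain N where "{w. p w \<noteq> 0} \<subseteq> {xs. set xs \<subseteq> UNIV \<and> length xs \<le> N}" by auto
  moreover have "finite {xs. set xs \<subseteq> (UNIV::'a set) \<and> length xs \<le> N}"
    by (rule finite_lists_length_le) simp
  ultimately show "ncfinite p" unfolding ncfinite_def using finite_subset by blast
qed

lemma ncfinite_ncmult:
  fixes p :: "('a::finite) ncpoly"
  assumes "ncfinite p" "ncfinite q"
  shows "ncfinite (ncmult p q)"
proof -
  obtain N1 where N1: "\<And>w. p w \<noteq> 0 \<Longrightarrow> length w \<le> N1"
    using assms(1) ncfinite_iff_length_bounded by blast
  obtain N2 where N2: "\<And>w. q w \<noteq> 0 \<Longrightarrow> length w \<le> N2"
    using assms(2) ncfinite_iff_length_bounded by blast
  have "length w \<le> N1 + N2" if "ncmult p q w \<noteq> 0" for w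
  proof -
    obtain i where "i \<le> length w" "p (take i w) * q (drop i w) \<noteq> 0"
      using \<open>ncmult p q w \<noteq> 0\<close> unfolding ncmult_def
      by (meson atMost_iff sum.not_neutral_contains_not_neutral)
    then show ?thesis using N1[of "take i w"] N2[of "drop i w"] by fastforce
  qed
  then show ?thesis using ncfinite_iff_length_bounded by blast
qed

section \<open>Congruence modulo a two-sided ideal\<close>

lemma ncideal_scale: "p \<in> ncideal G \<Longrightarrow> (\<lambda>w. c * p w) \<in> ncideal G"
  using ncideal.lmult[OF _ ncfinite_nc_const, of p G c]
  by (simp add: ncmult_const_left[abs_def])

lemma ncideal_sum:
  "finite A \<Longrightarrow> (\<And>j. j \<in> A \<Longrightarrow> f j \<in> ncideal G) \<Longrightarrow> (\<lambda>w. \<Sum>j\<in>A. f j w) \<in> ncideal G"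
proof (induction A rule: finite_induct)
  case empty
  then show ?case by (simp add: ncideal.zero)
next
  case (insert x F)
  then show ?case using ncideal.add[of "f x" G "\<lambda>w. \<Sum>j\<in>F. f j w"] by simp
qed

definition nccong :: "'a ncpoly set \<Rightarrow> 'a ncpoly \<Rightarrow> 'a ncpoly \<Rightarrow> bool" where
  "nccong G p q \<longleftrightarrow> (\<lambda>w. p w - q w) \<in> ncideal G"

lemma nccong_refl: "nccong G p p"
  unfolding nccong_def using ncideal.zero by simp

lemma nccong_sym: "nccong G p q \<Longrightarrow> nccong G q p"
  unfolding nccong_def by (drule ncideal_scale[where c = "-1"]) simp

lemma nccong_trans: "nccong G p q \<Longrightarrow> nccong G q r \<Longrightarrow> nccong G p r"
  unfolding nccong_def by (drule (1) ncideal.add) simp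

lemma nccong_ncmult_left: "nccong G p q \<Longrightarrow> ncfinite r \<Longrightarrow> nccong G (ncmult r p) (ncmult r q)"
  unfolding nccong_def by (drule (1) ncideal.lmult) (simp add: ncmult_diff_right)

lemma nccong_ncmult_right: "nccong G p q \<Longrightarrow> ncfinite r \<Longrightarrow> nccong G (ncmult p r) (ncmult q r)"
  unfolding nccong_def by (drule (1) ncideal.rmult) (simp add: ncmult_diff_left)

lemma nccong_lincomb:
  assumes "finite A" "\<And>j. j \<in> A \<Longrightarrow> nccong G (f j) (g j)"
  shows "nccong G (\<lambda>w. \<Sum>j\<in>A. c j * f j w) (\<lambda>w. \<Sum>j\<in>A. c j * g j w)"
proof -
  have "(\<lambda>w. \<Sum>j\<in>A. c j * (f j w - g j w)) \<in> ncideal G"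
    using assms by (intro ncideal_sum ncideal_scale) (simp_all add: nccong_def)
  then show ?thesis unfolding nccong_def by (simp add: right_diff_distrib sum_subtractf)
qed

lemma pairing_eq_if_nccong:
  assumes "nccong G p q" "\<gamma> \<in> ncperp (ncideal G)"
  shows "pairing p \<gamma> = pairing q \<gamma>"
proof -
  have "pairing (\<lambda>w. p w - q w) \<gamma> = 0" using assms by (simp add: nccong_def ncperp_def)
  then show ?thesis unfolding pairing_def by (simp add: left_diff_distrib sum_subtractf)
qed

section \<open>The noncommutative complete homogeneous functions\<close>

lemma DesP_Nil [simp]: "DesP [] = {}"
  by (simp add: DesP_def)

lemma DesP_singleton [simp]: "DesP [x] = {}"
  by (simp add: DesP_def)

definition complete_homP :: "nat \<Rightarrow> ('a::order) ncpoly" where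
  "complete_homP n = (\<lambda>w. of_bool (length w = n \<and> DesP w = {}))"

lemma complete_homP_0: "complete_homP 0 = nc_const 1"
  by (rule ext) (simp add: complete_homP_def nc_const_def)

lemma elemP_UNIV_apply:
  "elemP k UNIV w = of_bool (length w = k \<and> sorted_wrt (\<lambda>x y. y < x) w)"
  by (simp add: elemP_def)

lemma ncfinite_elemP: "ncfinite (elemP k S :: ('a::{finite,order}) ncpoly)"
  unfolding ncfinite_iff_length_bounded by (rule exI[of _ k]) (simp add: elemP_def)

lemma ncfinite_complete_homP: "ncfinite (complete_homP k :: ('a::{finite,order}) ncpoly)"
  unfolding ncfinite_iff_length_bounded by (rule exI[of _ k]) (simp add: complete_homP_def)

lemma DesP_eq_empty_iff: "DesP w = {} \<longleftrightarrow> (\<forall>i. Suc i < length w \<longrightarrow> \<not> w ! Suc i < w ! i)"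
  unfolding DesP_def by (auto simp: gr0_conv_Suc Suc_le_eq)

lemma DesP_Cons_Cons_eq_empty_iff:
  "DesP (x # y # u) = {} \<longleftrightarrow> \<not> y < x \<and> DesP (y # u) = {}"
  unfolding DesP_eq_empty_iff by (auto simp: All_less_Suc2)

lemma of_bool_no_descent_alternating_sum:
  fixes w :: "('a::order) list"
  assumes "w \<noteq> []"
  shows "of_bool (DesP w = {}) = (\<Sum>k<length w. (-1::int) ^ k *
           of_bool (sorted_wrt (\<lambda>x y. y < x) (take (Suc k) w) \<and> DesP (drop (Suc k) w) = {}))"
  using assms
proof (induction w)
  case Nil
  then show ?case by simp
next
  case (Cons x v)
  show ?case
  proof (cases v)
    case Nil
    then show ?thesis by simp
  next
    case (Cons y u)
    let ?t = "\<lambda>k. (-1::int) ^ k *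
      of_bool (sorted_wrt (\<lambda>x y. y < x) (take (Suc k) v) \<and> DesP (drop (Suc k) v) = {})"
    have decreasing_Cons: "sorted_wrt (\<lambda>x y. y < x) (x # y # u')
        \<longleftrightarrow> y < x \<and> sorted_wrt (\<lambda>x y. y < x) (y # u')" for u'
      by (rule sorted_wrt2) (auto simp: transp_def)
    have IH: "of_bool (DesP v = {}) = (\<Sum>k<length v. ?t k)" using Cons.IH Cons by simp
    have "(\<Sum>k<length (x # v). (-1::int) ^ k * of_bool (sorted_wrt (\<lambda>x y. y < x)
            (take (Suc k) (x # v)) \<and> DesP (drop (Suc k) (x # v)) = {}))
        = of_bool (DesP v = {}) + (\<Sum>k<length v. (-1::int) ^ Suc k * of_bool (sorted_wrt
            (\<lambda>x y. y < x) (take (Suc (Suc k)) (x # v)) \<and> DesP (drop (Suc (Suc k)) (x # v)) = {}))"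
      by (simp add: sum.lessThan_Suc_shift del: sum.lessThan_Suc)
    also have "\<dots> = of_bool (DesP v = {}) + (\<Sum>k<length v. - (of_bool (y < x) * ?t k))"
      by (simp add: Cons decreasing_Cons del: sorted_wrt.simps)
    also have "\<dots> = of_bool (DesP v = {}) - of_bool (y < x) * of_bool (DesP v = {})"
      by (simp add: IH sum_negf sum_distrib_left)
    finally show ?thesis using Cons by (simp add: DesP_Cons_Cons_eq_empty_iff)
  qed
qed

lemma complete_homP_recurrence:
  assumes "n \<noteq> 0"
  shows "complete_homP n
    = (\<lambda>w. \<Sum>k<n. (-1) ^ k * ncmult (elemP (Suc k) UNIV) (complete_homP (n - Suc k)) w)"
proof
  fix w :: "'a list"
  have initial_run: "ncmult (elemP (Suc k) UNIV) (complete_homP (n - Suc k)) w =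
      (if Suc k \<le> length w
       then elemP (Suc k) UNIV (take (Suc k) w) * complete_homP (n - Suc k) (drop (Suc k) w)
       else 0)" for k
    by (rule ncmult_homogeneous_left) (simp add: elemP_UNIV_apply)
  show "complete_homP n w
    = (\<Sum>k<n. (-1) ^ k * ncmult (elemP (Suc k) UNIV) (complete_homP (n - Suc k)) w)"
  proof (cases "length w = n")
    case True
    then have "w \<noteq> []" using assms by auto
    have "complete_homP n w = of_bool (DesP w = {})"
      using True by (simp add: complete_homP_def)
    also have "\<dots> = (\<Sum>k<n. (-1::int) ^ k * of_bool (sorted_wrt (\<lambda>x y. y < x)
            (take (Suc k) w) \<and> DesP (drop (Suc k) w) = {}))"
      unfolding True[symmetric] by (rule of_bool_no_descent_alternating_sum[OF \<open>w \<noteq> []\<close>])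
    also have "\<dots> = (\<Sum>k<n. (-1) ^ k * ncmult (elemP (Suc k) UNIV) (complete_homP (n - Suc k)) w)"
      using True
      by (intro sum.cong refl) (simp only: initial_run, simp add: complete_homP_def elemP_UNIV_apply)
    finally show ?thesis .
  next
    case False
    have "ncmult (elemP (Suc k) UNIV) (complete_homP (n - Suc k)) w = 0" if "k < n" for k
      using False that by (simp only: initial_run) (auto simp: complete_homP_def)
    then show ?thesis using False by (simp add: complete_homP_def)
  qed
qed

lemma nccong_commute_complete_homP:
  assumes "\<And>k. nccong G (ncmult p (elemP k UNIV)) (ncmult (elemP k UNIV) p)"
  shows "nccong G (ncmult p (complete_homP m)) (ncmult (complete_homP m) (p :: ('a::{finite,order}) ncpoly))"
proof (induction m rule: less_induct)
  case (less m)
  show ?case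
  proof (cases "m = 0")
    case True
    then show ?thesis by (simp add: complete_homP_0 nccong_refl ncmult_const_right ext)
  next
    case False
    define T :: "nat \<Rightarrow> 'a ncpoly" where
      "T j = ncmult (elemP (Suc j) UNIV) (complete_homP (m - Suc j))" for j
    have "nccong G (ncmult p (T j)) (ncmult (T j) p)" if "j < m" for j
    proof -
      let ?e = "elemP (Suc j) UNIV :: 'a ncpoly" and ?h = "complete_homP (m - Suc j) :: 'a ncpoly"
      have "nccong G (ncmult (ncmult p ?e) ?h) (ncmult (ncmult ?e p) ?h)"
        by (rule nccong_ncmult_right[OF assms ncfinite_complete_homP])
      moreover have "nccong G (ncmult ?e (ncmult p ?h)) (ncmult ?e (ncmult ?h p))"
        using less.IH[of "m - Suc j"] that False by (intro nccong_ncmult_left ncfinite_elemP) auto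
      ultimately show ?thesis unfolding T_def ncmult_assoc by (rule nccong_trans)
    qed
    then have "nccong G (\<lambda>w. \<Sum>j<m. (-1) ^ j * ncmult p (T j) w)
                        (\<lambda>w. \<Sum>j<m. (-1) ^ j * ncmult (T j) p w)"
      by (intro nccong_lincomb) auto
    then show ?thesis
      unfolding complete_homP_recurrence[OF False] T_def[symmetric]
        ncmult_lincomb_right ncmult_lincomb_left .
  qed
qed

lemma nccong_elemP_complete_homP:
  "nccong comm_gens (ncmult (elemP k UNIV) (complete_homP m))
                    (ncmult (complete_homP m) (elemP k UNIV :: ('a::{finite,order}) ncpoly))"
proof (rule nccong_commute_complete_homP)
  show "nccong comm_gens (ncmult (elemP k UNIV) (elemP l UNIV))
                         (ncmult (elemP l UNIV) (elemP k UNIV :: 'a ncpoly))" for l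
    unfolding nccong_def comm_gens_def by (rule ncideal.gen) blast
qed

lemma nccong_complete_homP_commute:
  "nccong comm_gens (ncmult (complete_homP a) (complete_homP b))
                    (ncmult (complete_homP b) (complete_homP a :: ('a::{finite,order}) ncpoly))"
  by (intro nccong_commute_complete_homP nccong_sym[OF nccong_elemP_complete_homP])

primrec complete_homP_prod :: "nat list \<Rightarrow> ('a::order) ncpoly" where
  "complete_homP_prod [] = nc_const 1"
| "complete_homP_prod (c # cs) = ncmult (complete_homP c) (complete_homP_prod cs)"

fun no_descent_blocks :: "nat list \<Rightarrow> ('a::order) list \<Rightarrow> bool" where
  "no_descent_blocks [] w \<longleftrightarrow> w = []"
| "no_descent_blocks (c # cs) w \<longleftrightarrow>
     c \<le> length w \<and> DesP (take c w) = {} \<and> no_descent_blocks cs (drop c w)"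

lemma complete_homP_prod_apply: "complete_homP_prod cs w = of_bool (no_descent_blocks cs w)"
proof (induction cs arbitrary: w)
  case Nil
  then show ?case by (simp add: nc_const_def)
next
  case (Cons c cs)
  have "ncmult (complete_homP c) (complete_homP_prod cs) w
      = (if c \<le> length w then complete_homP c (take c w) * complete_homP_prod cs (drop c w) else 0)"
    by (rule ncmult_homogeneous_left) (simp add: complete_homP_def)
  then show ?case using Cons.IH by (simp add: complete_homP_def)
qed

lemma length_if_no_descent_blocks: "no_descent_blocks cs w \<Longrightarrow> length w = sum_list cs"
  by (induction cs arbitrary: w) fastforce+

lemma ncfinite_complete_homP_prod: "ncfinite (complete_homP_prod cs :: ('a::{finite,order}) ncpoly)"
  by (induction cs) (simp_all add: ncfinite_nc_const ncfinite_ncmult ncfinite_complete_homP)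

lemma complete_homP_prod_filter_nonzero:
  "complete_homP_prod (filter (\<lambda>c. c \<noteq> 0) cs) = complete_homP_prod cs"
  by (induction cs) (simp_all add: complete_homP_0)

lemma nccong_complete_homP_prod_move_to_front:
  "nccong comm_gens (complete_homP_prod (ys @ x # zs))
                    (complete_homP_prod (x # ys @ zs) :: ('a::{finite,order}) ncpoly)"
proof (induction ys)
  case Nil
  then show ?case by (simp add: nccong_refl)
next
  case (Cons y ys)
  have "nccong comm_gens (complete_homP_prod (y # ys @ x # zs))
                         (complete_homP_prod (y # x # ys @ zs) :: 'a ncpoly)"
    using nccong_ncmult_left[OF Cons.IH ncfinite_complete_homP] by simp
  moreover have "nccong comm_gens (complete_homP_prod (y # x # ys @ zs))
                                  (complete_homP_prod (x # y # ys @ zs) :: 'a ncpoly)"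
    using nccong_ncmult_right[OF nccong_complete_homP_commute ncfinite_complete_homP_prod]
    by (simp add: ncmult_assoc)
  ultimately show ?case by (simp add: nccong_trans)
qed

lemma nccong_complete_homP_prod_perm:
  "mset xs = mset ys \<Longrightarrow>
   nccong comm_gens (complete_homP_prod xs) (complete_homP_prod ys :: ('a::{finite,order}) ncpoly)"
proof (induction xs arbitrary: ys)
  case Nil
  then show ?case by (simp add: nccong_refl)
next
  case (Cons x xs)
  then obtain ys1 ys2 where ys: "ys = ys1 @ x # ys2"
    by (metis list.set_intros(1) set_mset_mset split_list)
  with Cons.prems have "nccong comm_gens (complete_homP_prod xs)
                                         (complete_homP_prod (ys1 @ ys2) :: 'a ncpoly)"
    by (intro Cons.IH) simp
  then have "nccong comm_gens (complete_homP_prod (x # xs))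
                              (complete_homP_prod (x # ys1 @ ys2) :: 'a ncpoly)"
    using nccong_ncmult_left[OF _ ncfinite_complete_homP] by simp
  then show ?case
    using nccong_complete_homP_prod_move_to_front nccong_sym nccong_trans ys by metis
qed

section \<open>Coefficients of the quasisymmetric expansion\<close>

definition exponent_word :: "(nat \<Rightarrow> nat) \<Rightarrow> nat list \<Rightarrow> nat list" where
  "exponent_word \<alpha> ls = concat (map (\<lambda>i. replicate (\<alpha> i) i) ls)"

lemma exponent_word_Cons: "exponent_word \<alpha> (l # ls) = replicate (\<alpha> l) l @ exponent_word \<alpha> ls"
  by (simp add: exponent_word_def)

lemma exponent_word_upt_Suc:
  "exponent_word \<alpha> [0..<Suc M] = exponent_word \<alpha> [0..<M] @ replicate (\<alpha> M) M"
  by (simp add: exponent_word_def)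

lemma set_exponent_word: "set (exponent_word \<alpha> ls) \<subseteq> set ls"
  by (auto simp: exponent_word_def)

lemma length_exponent_word: "length (exponent_word \<alpha> ls) = sum_list (map \<alpha> ls)"
  by (induction ls) (simp_all add: exponent_word_def)

lemma count_list_exponent_word:
  "count_list (exponent_word \<alpha> [0..<M]) i = (if i < M then \<alpha> i else 0)"
proof (induction M)
  case 0
  then show ?case by (simp add: exponent_word_def)
next
  case (Suc M)
  have "count_list (replicate c M) i = (if i = M then c else 0)" for c
    by (induction c) auto
  then show ?case using Suc by (simp only: exponent_word_upt_Suc) simp
qed

lemma sorted_exponent_word: "sorted (exponent_word \<alpha> [0..<M])"
proof (induction M)
  case 0
  then show ?case by (simp add: exponent_word_def)
next
  case (Suc M)
  have "\<forall>x\<in>set (exponent_word \<alpha> [0..<M]). x \<le> M"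
    using set_exponent_word[of \<alpha> "[0..<M]"] by auto
  then show ?case using Suc unfolding exponent_word_upt_Suc by (auto simp: sorted_append)
qed

definition strict_at_descents :: "('a::order) list \<Rightarrow> nat list \<Rightarrow> bool" where
  "strict_at_descents w L \<longleftrightarrow> (\<forall>i. Suc i < length w \<longrightarrow> w ! Suc i < w ! i \<longrightarrow> L ! i < L ! Suc i)"

lemma strict_at_descents_append:
  assumes "length u = length L1" "length v = length L2" "\<forall>x\<in>set L1. \<forall>y\<in>set L2. x < y"
  shows "strict_at_descents (u @ v) (L1 @ L2) \<longleftrightarrow> strict_at_descents u L1 \<and> strict_at_descents v L2"
proof
  assume A: "strict_at_descents (u @ v) (L1 @ L2)"
  show "strict_at_descents u L1 \<and> strict_at_descents v L2"
    unfolding strict_at_descents_def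
  proof (intro conjI allI impI)
    fix i assume "Suc i < length u" "u ! Suc i < u ! i"
    then show "L1 ! i < L1 ! Suc i"
      using A[unfolded strict_at_descents_def, rule_format, of i] assms(1)
      by (simp add: nth_append)
  next
    fix i assume "Suc i < length v" "v ! Suc i < v ! i"
    then show "L2 ! i < L2 ! Suc i"
      using A[unfolded strict_at_descents_def, rule_format, of "length u + i"] assms(1)
      by (simp add: nth_append)
  qed
next
  assume B: "strict_at_descents u L1 \<and> strict_at_descents v L2"
  show "strict_at_descents (u @ v) (L1 @ L2)"
    unfolding strict_at_descents_def
  proof (intro allI impI)
    fix i assume i: "Suc i < length (u @ v)" "(u @ v) ! Suc i < (u @ v) ! i"
    consider "Suc i < length u" | "Suc i = length u" | "length u \<le> i" by linarith
    then show "(L1 @ L2) ! i < (L1 @ L2) ! Suc i"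
    proof cases
      case 1
      then show ?thesis using B i assms(1) by (simp add: strict_at_descents_def nth_append)
    next
      case 2
      then have "L1 ! i \<in> set L1" "L2 ! 0 \<in> set L2" using i assms by auto
      then show ?thesis using 2 assms by (simp add: nth_append)
    next
      case 3
      then show ?thesis
        using B i assms(1) spec[of _ "i - length u"]
        by (simp add: strict_at_descents_def nth_append Suc_diff_le)
    qed
  qed
qed

lemma strict_at_descents_replicate:
  "strict_at_descents w (replicate (length w) l) \<longleftrightarrow> DesP w = {}"
  by (auto simp: strict_at_descents_def DesP_eq_empty_iff)

lemma strict_at_descents_exponent_word_iff:
  assumes "sorted_wrt (<) ls" "length w = length (exponent_word \<alpha> ls)"
  shows "strict_at_descents w (exponent_word \<alpha> ls) \<longleftrightarrow> no_descent_blocks (map \<alpha> ls) w"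
  using assms
proof (induction ls arbitrary: w)
  case Nil
  then show ?case by (simp add: exponent_word_def strict_at_descents_def)
next
  case (Cons l ls)
  let ?c = "\<alpha> l" and ?L = "exponent_word \<alpha> ls"
  have "?c \<le> length w" using Cons.prems(2) by (simp add: exponent_word_Cons)
  then have lengths: "length (take ?c w) = length (replicate ?c l)" "length (drop ?c w) = length ?L"
    using Cons.prems(2) by (simp_all add: exponent_word_Cons)
  have separated: "\<forall>x\<in>set (replicate ?c l). \<forall>y\<in>set ?L. x < y"
    using Cons.prems(1) set_exponent_word[of \<alpha> ls] by auto
  have "strict_at_descents w (exponent_word \<alpha> (l # ls))
      \<longleftrightarrow> strict_at_descents (take ?c w @ drop ?c w) (replicate ?c l @ ?L)"
    by (simp add: exponent_word_Cons)
  also have "\<dots> \<longleftrightarrow> strict_at_descents (take ?c w) (replicate ?c l) \<and> strict_at_descents (drop ?c w) ?L"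
    by (rule strict_at_descents_append[OF lengths separated])
  also have "\<dots> \<longleftrightarrow> DesP (take ?c w) = {} \<and> no_descent_blocks (map \<alpha> ls) (drop ?c w)"
    using strict_at_descents_replicate[of "take ?c w" l] lengths Cons.IH[of "drop ?c w"] Cons.prems(1)
    by simp
  finally show ?case using \<open>?c \<le> length w\<close> by simp
qed

lemma sorted_eq_if_mset_eq: "sorted xs \<Longrightarrow> sorted ys \<Longrightarrow> mset xs = mset ys \<Longrightarrow> xs = ys"
  by (metis sorted_list_of_multiset_mset sorted_sort_id)

text \<open>A term of Q_D with exponent vector \<alpha> is a weakly increasing index sequence with content
  \<alpha>, and the only candidate is the exponent word.\<close>
lemma Qcoeff_eq_of_bool:
  assumes "\<forall>i\<ge>M. \<alpha> i = 0"
  defines "L \<equiv> exponent_word \<alpha> [0..<M]"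
  shows "Qcoeff D n \<alpha> = of_bool (length L = n \<and> (\<forall>j\<in>D. L ! (j - 1) < L ! j))"
proof -
  have count_L: "count_list L i = \<alpha> i" for i
    using assms count_list_exponent_word[of \<alpha> M i] by auto
  have sorted_L: "sorted L" unfolding L_def by (rule sorted_exponent_word)
  have unique: "(length s = n \<and> (\<forall>j. 1 \<le> j \<and> j < n \<longrightarrow> s ! (j - 1) \<le> s ! j)
      \<and> (\<forall>i. count_list s i = \<alpha> i)) \<longleftrightarrow> s = L \<and> length L = n" for s
  proof
    assume s: "length s = n \<and> (\<forall>j. 1 \<le> j \<and> j < n \<longrightarrow> s ! (j - 1) \<le> s ! j)
      \<and> (\<forall>i. count_list s i = \<alpha> i)"
    then have "sorted s" by (auto simp: sorted_iff_nth_Suc)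
    moreover have "mset s = mset L" by (rule multiset_eqI) (simp add: count_mset s count_L)
    ultimately show "s = L \<and> length L = n" using s sorted_L sorted_eq_if_mset_eq by blast
  next
    assume "s = L \<and> length L = n"
    then show "length s = n \<and> (\<forall>j. 1 \<le> j \<and> j < n \<longrightarrow> s ! (j - 1) \<le> s ! j)
      \<and> (\<forall>i. count_list s i = \<alpha> i)"
      using sorted_L count_L by (auto simp: sorted_iff_nth_mono)
  qed
  have "(length s = n \<and> (\<forall>j. 1 \<le> j \<and> j < n \<longrightarrow> s ! (j - 1) \<le> s ! j)
        \<and> (\<forall>j\<in>D. s ! (j - 1) < s ! j) \<and> (\<forall>i. count_list s i = \<alpha> i))
      \<longleftrightarrow> s = L \<and> length L = n \<and> (\<forall>j\<in>D. L ! (j - 1) < L ! j)" for s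
    using unique[of s] by auto
  then show ?thesis unfolding Qcoeff_def by simp
qed

lemma Qcoeff_DesP_eq_of_bool:
  fixes w :: "('a::order) list"
  assumes "\<forall>i\<ge>M. \<alpha> i = 0"
  shows "Qcoeff (DesP w) (length w) \<alpha> = of_bool (no_descent_blocks (map \<alpha> [0..<M]) w)"
proof -
  let ?L = "exponent_word \<alpha> [0..<M]"
  have "(\<forall>j\<in>DesP w. ?L ! (j - 1) < ?L ! j) \<longleftrightarrow> strict_at_descents w ?L"
    unfolding DesP_def strict_at_descents_def
    by (auto simp: gr0_conv_Suc Suc_le_eq)
  then show ?thesis
    using strict_at_descents_exponent_word_iff[of "[0..<M]" w \<alpha>]
      length_if_no_descent_blocks[of "map \<alpha> [0..<M]" w] length_exponent_word[of \<alpha> "[0..<M]"]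
    by (auto simp: Qcoeff_eq_of_bool[OF assms])
qed

definition nonzero_exponents :: "(nat \<Rightarrow> nat) \<Rightarrow> nat \<Rightarrow> nat list" where
  "nonzero_exponents \<alpha> M = filter (\<lambda>c. c \<noteq> 0) (map \<alpha> [0..<M])"

lemma Fcoeff_eq_pairing:
  fixes \<gamma> :: "('a::order) ncpoly"
  assumes "\<forall>i\<ge>M. \<alpha> i = 0"
  shows "Fcoeff \<gamma> \<alpha> = pairing (complete_homP_prod (nonzero_exponents \<alpha> M)) \<gamma>"
  unfolding Fcoeff_def pairing_def nonzero_exponents_def complete_homP_prod_filter_nonzero
  by (simp add: Qcoeff_DesP_eq_of_bool[OF assms] complete_homP_prod_apply mult.commute)

lemma Fcoeff_eq_0_if_infinite_support:
  assumes "infinite {i. \<alpha> i \<noteq> 0}"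
  shows "Fcoeff \<gamma> \<alpha> = 0"
proof -
  have "\<not> (\<forall>i. count_list s i = \<alpha> i)" for s :: "nat list"
  proof
    assume "\<forall>i. count_list s i = \<alpha> i"
    then have "{i. \<alpha> i \<noteq> 0} \<subseteq> set s" using count_notin[of _ s] by force
    then show False using assms finite_subset by blast
  qed
  then have "Qcoeff D n \<alpha> = 0" for D n
    unfolding Qcoeff_def by (metis (mono_tags, lifting) card.empty empty_Collect_eq)
  then show ?thesis by (simp add: Fcoeff_def)
qed

lemma mset_nonzero_exponents:
  assumes "\<forall>i\<ge>M. \<alpha> i = 0"
  shows "mset (nonzero_exponents \<alpha> M) = image_mset \<alpha> (mset_set {i. \<alpha> i \<noteq> 0})"
proof -
  have "{i \<in> {0..<M}. \<alpha> i \<noteq> 0} = {i. \<alpha> i \<noteq> 0}" using assms by (auto simp: not_less[symmetric])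
  then show ?thesis by (simp add: nonzero_exponents_def filter_mset_image_mset)
qed

lemma mset_nonzero_exponents_comp_bij:
  assumes "bij \<sigma>" "\<forall>i\<ge>M. \<alpha> i = 0" "\<forall>i\<ge>M. \<alpha> (\<sigma> i) = 0"
  shows "mset (nonzero_exponents (\<alpha> \<circ> \<sigma>) M) = mset (nonzero_exponents \<alpha> M)"
proof -
  let ?S = "{i. \<alpha> i \<noteq> 0}"
  have "{i. (\<alpha> \<circ> \<sigma>) i \<noteq> 0} = \<sigma> -` ?S" by auto
  then have "mset (nonzero_exponents (\<alpha> \<circ> \<sigma>) M) = image_mset (\<alpha> \<circ> \<sigma>) (mset_set (\<sigma> -` ?S))"
    using mset_nonzero_exponents[of M "\<alpha> \<circ> \<sigma>"] assms(3) by simp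
  also have "\<dots> = image_mset \<alpha> (image_mset \<sigma> (mset_set (\<sigma> -` ?S)))"
    by (simp add: image_mset.compositionality)
  also have "image_mset \<sigma> (mset_set (\<sigma> -` ?S)) = mset_set (\<sigma> ` \<sigma> -` ?S)"
    using bij_is_inj[OF assms(1)] by (intro image_mset_mset_set) (rule inj_on_subset, auto)
  also have "\<sigma> ` \<sigma> -` ?S = ?S"
    by (rule surj_image_vimage_eq[OF bij_is_surj[OF assms(1)]])
  also have "image_mset \<alpha> (mset_set ?S) = mset (nonzero_exponents \<alpha> M)"
    using mset_nonzero_exponents[OF assms(2)] by simp
  finally show ?thesis .
qed

theorem mainTheorem4:
  fixes \<gamma> :: "('a::{finite,order}) list \<Rightarrow> int"
  assumes "ncfinite \<gamma>"
    and "\<gamma> \<in> ncperp (ncideal comm_gens)"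
  shows "symmetric_series (Fcoeff \<gamma>)"
  unfolding symmetric_series_def
proof (intro allI impI)
  fix \<sigma> \<alpha> :: "nat \<Rightarrow> nat"
  assume "bij \<sigma>"
  let ?S = "{i. \<alpha> i \<noteq> 0}"
  have support_comp: "{i. (\<alpha> \<circ> \<sigma>) i \<noteq> 0} = \<sigma> -` ?S" by auto
  show "Fcoeff \<gamma> (\<alpha> \<circ> \<sigma>) = Fcoeff \<gamma> \<alpha>"
  proof (cases "finite ?S")
    case False
    then show ?thesis
      using \<open>bij \<sigma>\<close> support_comp finite_vimage_iff Fcoeff_eq_0_if_infinite_support by metis
  next
    case True
    then have "finite (?S \<union> \<sigma> -` ?S)" using finite_vimage_iff[OF \<open>bij \<sigma>\<close>] by blast
    then obtain M where "?S \<union> \<sigma> -` ?S \<subseteq> {..<M}" by (auto simp: finite_nat_set_iff_bounded)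
    then have M: "\<forall>i\<ge>M. \<alpha> i = 0" "\<forall>i\<ge>M. \<alpha> (\<sigma> i) = 0" by force+
    have "Fcoeff \<gamma> (\<alpha> \<circ> \<sigma>) = pairing (complete_homP_prod (nonzero_exponents (\<alpha> \<circ> \<sigma>) M)) \<gamma>"
      using M(2) by (intro Fcoeff_eq_pairing) simp
    also have "\<dots> = pairing (complete_homP_prod (nonzero_exponents \<alpha> M)) \<gamma>"
      using mset_nonzero_exponents_comp_bij[OF \<open>bij \<sigma>\<close> M]
      by (intro pairing_eq_if_nccong[OF nccong_complete_homP_prod_perm assms(2)])
    also have "\<dots> = Fcoeff \<gamma> \<alpha>"
      using M(1) by (intro Fcoeff_eq_pairing[symmetric])
    finally show ?thesis .
  qed
qed

end
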